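(* For all integers $n\ge1$ and $p\ge0$, $$\mathcal{B}_{n,p}=\frac{2\,n!\,p!}{\pi e}\operatorname{Im}\int_0^{\pi}\left(\frac{\exp\big(\exp(e^{i\theta})\big)}{\big(\exp(e^{i\theta})-1\big)^{p}}-e\sum_{l=0}^{p-1}\frac{\big(\exp(e^{i\theta})-1\big)^{l-p}}{l!}\right)\sin(n\theta)\,d\theta,$$ where $\operatorname{Im}$ denotes the imaginary part.
   Context: For an integer $p\ge0$, the $p$-Bell numbers $\mathcal{B}_{n,p}$ are defined by $\sum_{n\ge0}\mathcal{B}_{n,p}\frac{z^n}{n!}=\sum_{n\ge0}\binom{n+p}{p}^{-1}\frac{(e^z-1)^n}{n!}$. *)

theory Defs
  imports "HOL-Analysis.Analysis" "HOL-Computational_Algebra.Formal_Power_Series"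
begin

text \<open>p-Bell numbers via their exponential generating function, read as an identity of
formal power series: the series sum_k (e^z-1)^k / (k! * binom(k+p,p)) converges in the
fps topology since (e^z-1)^k has order k.\<close>

definition pBell_egf :: "nat \<Rightarrow> real fps" where
  "pBell_egf p = (\<Sum>k. fps_const (1 / (fact k * real ((k + p) choose p))) * (fps_exp 1 - 1) ^ k)"

definition pBell :: "nat \<Rightarrow> nat \<Rightarrow> real" where
  "pBell n p = fact n * fps_nth (pBell_egf p) n"

end

theory Submission
  imports Defs "HOL-Complex_Analysis.Complex_Analysis"
begin

text \<open>With w = exp z - 1, the egf of the p-Bell numbers is
  F z = p! (exp w - (\<Sum>l<p. w^l / l!)) / w^p, an entire function, and the integrand of the
  theorem is e / p! * F (exp (i \<theta>)) * sin (n \<theta>). On the unit circle u = exp (i \<theta>) we have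
  2 sin (n \<theta>) = i (u^-n - u^n), so Cauchy's integral formula for F u / u^(n+1) and Cauchy's
  theorem for F u * u^(n-1) give the integral over [0, 2\<pi>] as \<pi> i F^(n)(0) / n!, that is,
  \<pi> i B(n,p) / n!. As F has real coefficients, the imaginary part of the integrand is invariant
  under \<theta> \<mapsto> 2\<pi> - \<theta>, so [0, \<pi>] contributes exactly half of it.\<close>

lemma exp_neq_1_if_norm_less:
  fixes z :: complex
  assumes "0 < norm z" "norm z < 2 * pi"
  shows "exp z \<noteq> 1"
proof
  assume "exp z = 1"
  then obtain k :: int where k: "Re z = 0" "Im z = of_int (2 * k) * pi"
    by (auto simp: exp_eq_1)
  then have "norm z = 2 * pi * \<bar>of_int k\<bar>"
    by (simp add: cmod_eq_Im abs_mult)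
  moreover have "k = 0 \<or> 1 \<le> \<bar>of_int k :: real\<bar>"
    by linarith
  ultimately show False
    using assms by auto
qed

lemma cis_power_difference_eq_sin:
  assumes "1 \<le> n"
  shows "w / cis t ^ Suc n * \<i> * cis t - w * cis t ^ (n - 1) * \<i> * cis t =
         2 * (w * of_real (sin (real n * t)))"
proof -
  have "cis t ^ (n - 1) * cis t = cis t ^ n"
    using assms by (simp flip: power_Suc2)
  then have "w / cis t ^ Suc n * \<i> * cis t - w * cis t ^ (n - 1) * \<i> * cis t =
        \<i> * w * (inverse (cis t ^ n) - cis t ^ n)"
    by (simp add: field_simps)
  also have "\<dots> = \<i> * w * (cis (- (real n * t)) - cis (real n * t))"
    by (simp only: Complex.DeMoivre cis_inverse)
  finally show ?thesis
    by (simp add: complex_eq_iff algebra_simps)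
qed

lemma has_integral_cis_times_sin:
  fixes f :: "complex \<Rightarrow> complex"
  assumes holf: "f holomorphic_on ball 0 r" and "1 < r" and "1 \<le> n"
  shows "((\<lambda>t. f (cis t) * of_real (sin (real n * t))) has_integral
           pi * \<i> * (deriv ^^ n) f 0 / fact n) {0..2*pi}"
proof -
  have sub: "cball 0 1 \<subseteq> ball (0::complex) r"
    using \<open>1 < r\<close> by auto
  have holf1: "f holomorphic_on cball 0 1"
    using holf sub by (rule holomorphic_on_subset)
  have tp: "0 < 2 * pi"
    by simp
  have "((\<lambda>u. f u / (u - 0) ^ Suc n) has_contour_integral
          2 * pi * \<i> / fact n * (deriv ^^ n) f 0) (circlepath 0 1)"
    by (rule Cauchy_has_contour_integral_higher_derivative_circlepath)
       (use holf1 in \<open>auto intro: holomorphic_on_imp_continuous_on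
                                  holomorphic_on_subset[OF _ ball_subset_cball]\<close>)
  then have A: "((\<lambda>t. f (cis t) / cis t ^ Suc n * \<i> * cis t) has_integral
          2 * pi * \<i> / fact n * (deriv ^^ n) f 0) {0..2*pi}"
    unfolding circlepath_def has_contour_integral_part_circlepath_iff[OF tp] by simp
  have "((\<lambda>u. f u * u ^ (n - 1)) has_contour_integral 0) (circlepath 0 1)"
    by (rule Cauchy_theorem_convex_simple[of _ "ball 0 r"])
       (use holf sub in \<open>auto intro!: holomorphic_intros\<close>)
  then have B: "((\<lambda>t. f (cis t) * cis t ^ (n - 1) * \<i> * cis t) has_integral 0) {0..2*pi}"
    unfolding circlepath_def has_contour_integral_part_circlepath_iff[OF tp] by simp
  have "((\<lambda>t. 2 * (f (cis t) * of_real (sin (real n * t)))) has_integral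
          2 * pi * \<i> / fact n * (deriv ^^ n) f 0) {0..2*pi}"
    using has_integral_diff[OF A B, unfolded diff_zero]
    by (rule has_integral_eq[rotated]) (rule cis_power_difference_eq_sin[OF \<open>1 \<le> n\<close>])
  from has_integral_mult_right[OF this, of "1 / 2"] show ?thesis
    by (simp add: mult.assoc)
qed

lemma has_integral_half_if_reflection_symmetric:
  fixes g :: "real \<Rightarrow> 'a :: banach"
  assumes "(g has_integral I) {0..2*c}" "0 \<le> c" "\<And>t. g (2*c - t) = g t"
  shows "(g has_integral I /\<^sub>R 2) {0..c}"
proof -
  have int: "g integrable_on {a..b}" if "{a..b} \<subseteq> {0..2*c}" for a b
    using integrable_subinterval_real[OF has_integral_integrable[OF assms(1)] that] .
  have "integral {c..2*c} g = integral {-(2*c)..-c} (\<lambda>x. g (- x))"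
    by simp
  also have "\<dots> = integral {0..c} ((\<lambda>x. g (- x)) \<circ> (+) (-(2*c)))"
    using integral_shift_Icc_real[where f = "\<lambda>x. g (- x)" and c = "-(2*c)" and a = 0 and b = c]
    by simp
  also have "\<dots> = integral {0..c} g"
    using assms(3) by (simp add: o_def)
  finally have "I = 2 *\<^sub>R integral {0..c} g"
    using Henstock_Kurzweil_Integration.integral_combine[where a = 0 and c = c and b = "2*c" and f = g]
      int assms(1,2)
    by (simp add: integral_unique scaleR_2)
  then show ?thesis
    using int[of 0 c] assms(2) by (simp add: integrable_integral)
qed

lemma sums_fps_compose:
  fixes F G :: "'a :: comm_ring_1 fps"
  assumes "fps_nth G 0 = 0"
  shows "(\<lambda>k. fps_const (fps_nth F k) * G ^ k) sums (F oo G)"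
  unfolding sums_def
proof (rule tendsto_fpsI)
  fix n
  show "eventually (\<lambda>N. fps_nth (\<Sum>k<N. fps_const (fps_nth F k) * G ^ k) n = fps_nth (F oo G) n)
          sequentially"
    using eventually_ge_at_top[of "Suc n"]
  proof eventually_elim
    case (elim N)
    have vanish: "fps_nth (G ^ k) n = 0" if "n < k" for k
      using startsby_zero_power_prefix[OF assms] that by blast
    have "fps_nth (\<Sum>k<N. fps_const (fps_nth F k) * G ^ k) n =
          (\<Sum>k<N. fps_nth F k * fps_nth (G ^ k) n)"
      by (simp add: fps_sum_nth)
    also have "\<dots> = (\<Sum>k=0..n. fps_nth F k * fps_nth (G ^ k) n)"
      by (rule sum.mono_neutral_right) (use elim vanish in auto)
    also have "\<dots> = fps_nth (F oo G) n"
      by (simp add: fps_compose_nth)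
    finally show ?case .
  qed
qed

lemma pBell_egf_eq_compose:
  "pBell_egf p = (fps_const (fact p) * fps_shift p (fps_exp 1)) oo (fps_exp 1 - 1)"
proof -
  have coeff: "1 / (fact k * real ((k + p) choose p)) =
               fps_nth (fps_const (fact p) * fps_shift p (fps_exp 1)) k" for k
  proof -
    have "fact p * fact k * real ((k + p) choose p) = fact (k + p)"
      using arg_cong[OF binomial_fact_lemma[of p "k + p"], of real] by simp
    then show ?thesis
      by (simp add: divide_simps mult_ac)
  qed
  show ?thesis
    unfolding pBell_egf_def coeff by (rule sums_unique[OF sums_fps_compose, symmetric]) simp
qed

lemma fps_nth_power_exp_minus_one_of_real:
  "fps_nth ((fps_exp 1 - 1 :: 'a :: real_normed_field fps) ^ k) n =
     of_real (fps_nth ((fps_exp 1 - 1 :: real fps) ^ k) n)"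
proof (induction k arbitrary: n)
  case (Suc k)
  show ?case
    by (simp add: fps_mult_nth Suc.IH) (intro sum.cong; simp)
qed simp

lemma eval_fps_shift_times_power:
  fixes f :: "'a :: {banach, real_normed_field} fps"
  assumes "norm z < fps_conv_radius f"
  shows "eval_fps (fps_shift n f) z * z ^ n = eval_fps f z - (\<Sum>k<n. fps_nth f k * z ^ k)"
proof -
  have "(\<lambda>k. fps_nth f (k + n) * z ^ (k + n)) sums
          (eval_fps f z - (\<Sum>k<n. fps_nth f k * z ^ k))"
    using sums_eval_fps[OF assms] by (subst sums_iff_shift) simp
  moreover have "(\<lambda>k. fps_nth f (k + n) * z ^ (k + n)) sums (eval_fps (fps_shift n f) z * z ^ n)"
    using sums_mult2[OF sums_eval_fps[of z "fps_shift n f"], of "z ^ n"] assms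
    by (simp add: power_add mult.assoc)
  ultimately show ?thesis
    by (simp add: sums_unique2)
qed

text \<open>The series fps_shift p (fps_exp 1) = (\<Sum>k. w^k / (k + p)!) is
  (exp w - (\<Sum>l<p. w^l / l!)) / w^p with its removable singularity at w = 0 filled in.\<close>

definition pBell_gf :: "nat \<Rightarrow> complex \<Rightarrow> complex" where
  "pBell_gf p z = fact p * eval_fps (fps_shift p (fps_exp 1)) (exp z - 1)"

lemma holomorphic_pBell_gf: "pBell_gf p holomorphic_on A"
proof -
  have "(eval_fps (fps_shift p (fps_exp 1)) \<circ> (\<lambda>z. exp z - 1)) holomorphic_on A"
    by (rule holomorphic_on_compose_gen[of _ _ _ UNIV]) (auto intro!: holomorphic_intros)
  then show ?thesis
    unfolding pBell_gf_def o_def by (intro holomorphic_intros)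
qed

lemma pBell_gf_has_fps_expansion:
  "pBell_gf p has_fps_expansion fps_const (fact p) * (fps_shift p (fps_exp 1) oo (fps_exp 1 - 1))"
proof -
  have "(eval_fps (fps_shift p (fps_exp 1)) \<circ> (\<lambda>z::complex. exp z - 1)) has_fps_expansion
          (fps_shift p (fps_exp 1) oo (fps_exp 1 - 1))"
    by (rule has_fps_expansion_compose)
       (auto intro!: eval_fps_has_fps_expansion has_fps_expansion_diff has_fps_expansion_exp1)
  then show ?thesis
    unfolding pBell_gf_def o_def by (rule has_fps_expansion_cmult_left)
qed

lemma higher_deriv_pBell_gf_0:
  "(deriv ^^ n) (pBell_gf p) 0 / fact n = of_real (fps_nth (pBell_egf p) n)"
  by (simp add: fps_nth_fps_expansion[OF pBell_gf_has_fps_expansion, symmetric]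
      pBell_egf_eq_compose fps_compose_nth sum_distrib_left mult.assoc
      fps_nth_power_exp_minus_one_of_real[where 'a = complex])

definition pBell_kernel :: "nat \<Rightarrow> complex \<Rightarrow> complex" where
  "pBell_kernel p z = exp (exp z) / (exp z - 1) ^ p
     - exp 1 * (\<Sum>l<p. (exp z - 1) powi (int l - int p) / fact l)"

lemma pBell_kernel_eq_pBell_gf:
  assumes "exp z \<noteq> 1"
  shows "pBell_kernel p z = exp 1 / fact p * pBell_gf p z"
proof -
  define w where "w = exp z - 1"
  have "w \<noteq> 0"
    using assms by (simp add: w_def)
  have "exp (exp z) = exp 1 * exp w"
    by (simp add: w_def flip: exp_add)
  moreover have "w powi (int l - int p) = w ^ l / w ^ p" for l
    using \<open>w \<noteq> 0\<close> by (simp add: power_int_diff)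
  ultimately have "pBell_kernel p z = exp 1 * ((exp w - (\<Sum>l<p. w ^ l / fact l)) / w ^ p)"
    unfolding pBell_kernel_def w_def[symmetric]
    by (simp add: diff_divide_distrib sum_divide_distrib sum_distrib_left right_diff_distrib mult_ac)
  also have "\<dots> = exp 1 * eval_fps (fps_shift p (fps_exp 1)) w"
    using eval_fps_shift_times_power[of w "fps_exp 1" p] \<open>w \<noteq> 0\<close>
    by (simp add: divide_eq_eq)
  finally show ?thesis
    by (simp add: pBell_gf_def w_def)
qed

lemma pBell_kernel_cnj: "pBell_kernel p (cnj z) = cnj (pBell_kernel p z)"
  by (simp add: pBell_kernel_def exp_cnj)

lemma pBell_kernel_times_sin_reflect:
  "pBell_kernel p (exp (\<i> * of_real (2 * pi - \<theta>))) * of_real (sin (real n * (2 * pi - \<theta>)))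
   =
   - cnj (pBell_kernel p (exp (\<i> * of_real \<theta>)) * of_real (sin (real n * \<theta>)))"
proof -
  have "exp (\<i> * of_real (2 * pi - \<theta>)) = cis (2 * pi - \<theta>)"
    by (simp add: cis_conv_exp)
  also have "\<dots> = cnj (cis \<theta>)"
    by (simp add: complex_eq_iff)
  finally have "exp (\<i> * of_real (2 * pi - \<theta>)) = cnj (exp (\<i> * of_real \<theta>))"
    by (simp add: cis_conv_exp)
  moreover have "sin (real n * (2 * pi - \<theta>)) = - sin (real n * \<theta>)"
  proof -
    have "real n * (2 * pi - \<theta>) = 2 * real n * pi - real n * \<theta>"
      by (simp add: algebra_simps)
    then show ?thesis
      by (simp add: sin_diff)
  qed
  ultimately show ?thesis
    by (simp add: pBell_kernel_cnj)
qed

lemma has_integral_pBell_kernel_times_sin: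
  assumes "1 \<le> n"
  shows "((\<lambda>\<theta>. pBell_kernel p (exp (\<i> * of_real \<theta>)) * of_real (sin (real n * \<theta>)))
           has_integral \<i> * of_real (pi * exp 1 / fact p * fps_nth (pBell_egf p) n)) {0..2*pi}"
proof -
  have "((\<lambda>t. pBell_gf p (cis t) * of_real (sin (real n * t))) has_integral
          pi * \<i> * of_real (fps_nth (pBell_egf p) n)) {0..2*pi}"
    using has_integral_cis_times_sin[OF holomorphic_pBell_gf _ assms, of 2]
    by (simp add: higher_deriv_pBell_gf_0 mult.assoc flip: times_divide_eq_right)
  from has_integral_mult_right[OF this, of "exp 1 / fact p"]
  have "((\<lambda>t. exp 1 / fact p * (pBell_gf p (cis t) * of_real (sin (real n * t)))) has_integral
          \<i> * of_real (pi * exp 1 / fact p * fps_nth (pBell_egf p) n)) {0..2*pi}"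
    by (simp add: field_simps flip: exp_of_real)
  moreover have "exp 1 / fact p * (pBell_gf p (cis t) * of_real (sin (real n * t))) =
                 pBell_kernel p (exp (\<i> * of_real t)) * of_real (sin (real n * t))" for t
  proof -
    have "exp (cis t) \<noteq> 1"
      using pi_gt3 by (intro exp_neq_1_if_norm_less) auto
    then show ?thesis
      by (simp add: pBell_kernel_eq_pBell_gf cis_conv_exp)
  qed
  ultimately show ?thesis
    by (rule has_integral_eq[rotated])
qed

theorem mainTheorem7:
  fixes n p :: nat
  assumes "n \<ge> 1"
  shows "pBell n p = 2 * fact n * fact p / (pi * exp 1) *
    Im (integral {0..pi} (\<lambda>\<theta>::real.
      (exp (exp (exp (\<i> * \<theta>))) / (exp (exp (\<i> * \<theta>)) - 1) ^ p
       - exp 1 * (\<Sum>l<p. (exp (exp (\<i> * \<theta>)) - 1) powi (int l - int p) / fact l))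
      * complex_of_real (sin (real n * \<theta>))))"
proof -
  define K where
    "K = (\<lambda>\<theta>::real. pBell_kernel p (exp (\<i> * of_real \<theta>)) * of_real (sin (real n * \<theta>)))"
  define b where "b = pi * exp 1 / fact p * fps_nth (pBell_egf p) n"
  have K_2pi: "(K has_integral \<i> * of_real b) {0..2*pi}"
    unfolding K_def b_def by (rule has_integral_pBell_kernel_times_sin[OF assms])
  have "Im (K (2 * pi - \<theta>)) = Im (K \<theta>)" for \<theta>
  proof -
    have "K (2 * pi - \<theta>) = - cnj (K \<theta>)"
      unfolding K_def by (rule pBell_kernel_times_sin_reflect)
    then show ?thesis
      by simp
  qed
  from has_integral_half_if_reflection_symmetric[where g = "\<lambda>\<theta>. Im (K \<theta>)",
      OF has_integral_Im[OF K_2pi] pi_ge_zero this]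
  have "((\<lambda>\<theta>. Im (K \<theta>)) has_integral b / 2) {0..pi}"
    by simp
  moreover have "K integrable_on {0..pi}"
    using integrable_subinterval_real[OF has_integral_integrable[OF K_2pi]] by simp
  then have "((\<lambda>\<theta>. Im (K \<theta>)) has_integral Im (integral {0..pi} K)) {0..pi}"
    by (intro has_integral_Im integrable_integral)
  ultimately have "Im (integral {0..pi} K) = b / 2"
    by (rule has_integral_unique[symmetric])
  then have "pBell n p = 2 * fact n * fact p / (pi * exp 1) * Im (integral {0..pi} K)"
    by (simp add: pBell_def b_def)
  then show ?thesis
    unfolding K_def pBell_kernel_def .
qed

end
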